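(* Let $k$ be an even positive integer. Then each connected component of $\mathcal F_k$ is a tree in which every vertex has infinitely many neighbors.
   Context: The vertex set $V$ consists of all reduced fractions $p/q$ with $p,q\in\mathbb Z$, $\gcd(p,q)=1$, together with $1/0$; here $p/q$ and $(-p)/(-q)$ denote the same vertex. For vertices define $d(p/q,a/b)=|pb-qa|$. The graph $\mathcal F_k$ has vertex set $V$, with an edge between $p/q$ and $a/b$ exactly when $d(p/q,a/b)=k$. *)

theory Defs
  imports Main
begin

text \<open>Vertices: reduced fractions p/q, represented by the normalized integer pair (p,q)
  with gcd(p,q)=1 and either q > 0, or q = 0 and p = 1 (the vertex 1/0).
  Each class {(p,q),(-p,-q)} has exactly one such representative.\<close>
definition Vert :: "(int \<times> int) set" where
  "Vert = {(p, q). coprime p q \<and> (q > 0 \<or> (q = 0 \<and> p = 1))}"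

definition fdist :: "int \<times> int \<Rightarrow> int \<times> int \<Rightarrow> int" where
  "fdist x y = \<bar>fst x * snd y - snd x * fst y\<bar>"

definition Fadj :: "int \<Rightarrow> int \<times> int \<Rightarrow> int \<times> int \<Rightarrow> bool" where
  "Fadj k x y \<longleftrightarrow> x \<in> Vert \<and> y \<in> Vert \<and> fdist x y = k"

definition component :: "('a \<Rightarrow> 'a \<Rightarrow> bool) \<Rightarrow> 'a \<Rightarrow> 'a set" where
  "component E v = {w. E\<^sup>*\<^sup>* v w}"

definition has_cycle_in :: "('a \<Rightarrow> 'a \<Rightarrow> bool) \<Rightarrow> 'a set \<Rightarrow> bool" where
  "has_cycle_in E S \<longleftrightarrow> (\<exists>cs. length cs \<ge> 3 \<and> distinct cs \<and> set cs \<subseteq> S \<and>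
      (\<forall>i < length cs. E (cs ! i) (cs ! ((i + 1) mod length cs))))"

definition is_tree :: "('a \<Rightarrow> 'a \<Rightarrow> bool) \<Rightarrow> 'a set \<Rightarrow> bool" where
  "is_tree E S \<longleftrightarrow> S \<noteq> {} \<and>
     (\<forall>x\<in>S. \<forall>y\<in>S. (\<lambda>a b. a \<in> S \<and> b \<in> S \<and> E a b)\<^sup>*\<^sup>* x y) \<and>
     \<not> has_cycle_in E S"

end

theory Submission
  imports Defs "HOL-Library.Product_Lexorder"
begin

text \<open>Order the vertices \<open>p/q\<close> (with \<open>q \<ge> 0\<close>) by height \<open>(q, \<bar>p\<bar>)\<close>. For even \<open>k\<close>, a vertex
  \<open>p/q\<close> has at most one \<open>F\<^sub>k\<close>-neighbour of smaller height: suitably signed, neighbours \<open>(c, d)\<close>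
  solve \<open>p d - q c = k\<close>, so two of them differ by \<open>t (p, q)\<close>, and as \<open>k\<close> is even both agree with
  \<open>(p, q)\<close> modulo 2, forcing \<open>t\<close> to be even. For lower neighbours \<open>\<bar>d\<bar> \<le> q\<close>, so \<open>\<bar>t\<bar> = 2\<close>, both
  have denominator \<open>q\<close> and numerators of absolute value at most \<open>\<bar>p\<bar>\<close> summing to \<open>2p\<close>: one of
  them is \<open>p/q\<close> itself. So the highest vertex of a cycle cannot exist, and every component is a
  tree. If \<open>u p + v q = 1\<close>, then \<open>(1 + k s) (p, q) + k (-v, u)\<close> is a neighbour of \<open>p/q\<close> for all
  large \<open>s\<close>, giving infinitely many neighbours.\<close>

lemma coprime_not_both_even:
  fixes p q :: int
  assumes "coprime p q"
  shows "odd p \<or> odd q"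
  using coprime_common_divisor_int[OF assms, of 2] by auto

lemma even_det_imp_same_parity:
  fixes p q c d :: int
  assumes "coprime p q" "coprime c d" "even (p * d - q * c)"
  shows "even (c - p) \<and> even (d - q)"
  using coprime_not_both_even[OF assms(1)] coprime_not_both_even[OF assms(2)] assms(3)
  by (cases "even p"; cases "even q"; cases "even c"; cases "even d") auto

lemma det_eq_imp_multiple:
  fixes p q c1 d1 c2 d2 :: int
  assumes "coprime p q" "p * d1 - q * c1 = p * d2 - q * c2"
  obtains t where "c1 - c2 = t * p" "d1 - d2 = t * q"
proof -
  obtain u v where uv: "u * p + v * q = 1"
    using bezout_int[of p q] assms(1) by auto
  have rel: "q * (c1 - c2) = p * (d1 - d2)"
    using assms(2) by (simp add: algebra_simps)
  define t where "t = u * (c1 - c2) + v * (d1 - d2)"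
  have "t * p = (u * p + v * q) * (c1 - c2)" "t * q = (u * p + v * q) * (d1 - d2)"
    unfolding t_def using rel by algebra+
  then show thesis
    using that[of t] uv by simp
qed

lemma coprime_solutions_differ_by_even_multiple:
  fixes p q c1 d1 c2 d2 k :: int
  assumes "coprime p q" "coprime c1 d1" "coprime c2 d2" "even k"
    and "p * d1 - q * c1 = k" "p * d2 - q * c2 = k"
  obtains t where "even t" "c1 - c2 = t * p" "d1 - d2 = t * q"
proof -
  obtain t where t: "c1 - c2 = t * p" "d1 - d2 = t * q"
    using det_eq_imp_multiple[OF assms(1)] assms(5,6) by metis
  have "even (c1 - c2) \<and> even (d1 - d2)"
    using even_det_imp_same_parity[OF assms(1,2)] even_det_imp_same_parity[OF assms(1,3)]
      assms(4-6) even_diff by fastforce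
  then have "even t"
    using t coprime_not_both_even[OF assms(1)] by auto
  with t show thesis using that by blast
qed

text \<open>The last component only serves to make \<open>height\<close> injective.\<close>
definition height :: "int \<times> int \<Rightarrow> int \<times> int \<times> int" where
  "height y = (snd y, \<bar>fst y\<bar>, fst y)"

lemma inj_height: "inj height"
  by (rule injI) (auto simp: height_def prod_eq_iff)

lemma less_height_imp:
  "height (a, b) < height (p, q) \<Longrightarrow> b \<le> q \<and> (b = q \<longrightarrow> \<bar>a\<bar> \<le> \<bar>p\<bar>)"
  by (auto simp: height_def less_prod_def)

lemma fdist_commute: "fdist x y = fdist y x"
  by (simp add: fdist_def abs_minus_commute mult.commute)

lemma symp_Fadj: "symp (Fadj k)"
  by (auto intro: sympI simp: Fadj_def fdist_commute)

lemma Fadj_irrefl: "k \<noteq> 0 \<Longrightarrow> \<not> Fadj k x x"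
  by (simp add: Fadj_def fdist_def mult.commute)

lemma neg_notin_Vert: "(a, b) \<in> Vert \<Longrightarrow> (- a, - b) \<notin> Vert"
  by (auto simp: Vert_def)

lemma Vert_oriented_solution:
  fixes p q a b k :: int
  assumes "(a, b) \<in> Vert" "\<bar>p * b - q * a\<bar> = k"
  obtains s where "s = 1 \<or> s = -1" "p * (s * b) - q * (s * a) = k" "coprime (s * a) (s * b)"
proof -
  have "coprime a b" using assms(1) by (simp add: Vert_def)
  then show thesis
    using assms(2) that[of 1] that[of "-1"] by (auto simp: abs_if algebra_simps split: if_splits)
qed

lemma lower_solutions_top_or_eq:
  fixes p q a1 b1 a2 b2 k :: int
  assumes "even k" "coprime p q" "q > 0"
    and V: "(a1, b1) \<in> Vert" "(a2, b2) \<in> Vert"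
    and dist: "\<bar>p * b1 - q * a1\<bar> = k" "\<bar>p * b2 - q * a2\<bar> = k"
    and low: "b1 \<le> q" "b1 = q \<Longrightarrow> \<bar>a1\<bar> \<le> \<bar>p\<bar>" "b2 \<le> q" "b2 = q \<Longrightarrow> \<bar>a2\<bar> \<le> \<bar>p\<bar>"
  shows "(a1, b1) = (p, q) \<or> (a1, b1) = (a2, b2)"
proof (rule disjCI)
  assume "(a1, b1) \<noteq> (a2, b2)"
  have b: "0 \<le> b1" "0 \<le> b2"
    using V by (auto simp: Vert_def)
  obtain s1 where s1: "s1 = 1 \<or> s1 = -1" "p * (s1 * b1) - q * (s1 * a1) = k"
      "coprime (s1 * a1) (s1 * b1)"
    using Vert_oriented_solution[OF V(1) dist(1)] .
  obtain s2 where s2: "s2 = 1 \<or> s2 = -1" "p * (s2 * b2) - q * (s2 * a2) = k"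
      "coprime (s2 * a2) (s2 * b2)"
    using Vert_oriented_solution[OF V(2) dist(2)] .
  obtain t where t: "even t" "s1 * a1 - s2 * a2 = t * p" "s1 * b1 - s2 * b2 = t * q"
    using coprime_solutions_differ_by_even_multiple[OF \<open>coprime p q\<close> s1(3) s2(3) \<open>even k\<close> s1(2) s2(2)] .
  have "t \<noteq> 0"
  proof
    assume "t = 0"
    with t s1(1) s2(1) have "(a2, b2) = (a1, b1) \<or> (a2, b2) = (- a1, - b1)"
      by auto
    then show False
      using \<open>(a1, b1) \<noteq> (a2, b2)\<close> neg_notin_Vert[OF V(1)] V(2) by auto
  qed
  with \<open>even t\<close> have "2 \<le> \<bar>t\<bar>" by presburger
  then have "2 * q \<le> \<bar>t\<bar> * q"
    using \<open>q > 0\<close> by (simp add: mult_right_mono)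
  also have "\<dots> = \<bar>s1 * b1 - s2 * b2\<bar>"
    using t(3) \<open>q > 0\<close> by (simp add: abs_mult)
  also have "\<dots> \<le> b1 + b2"
    using s1(1) s2(1) b by auto
  finally have "b1 = q" "b2 = q"
    using low(1,3) by linarith+
  with t(3) have "(s1 - s2) * q = t * q"
    by (simp add: algebra_simps)
  with \<open>q > 0\<close> have "t = s1 - s2"
    by simp
  with t(2) \<open>2 \<le> \<bar>t\<bar>\<close> s1(1) s2(1) have "a1 + a2 = 2 * p"
    by auto
  then show "(a1, b1) = (p, q)"
    using low \<open>b1 = q\<close> \<open>b2 = q\<close> by (auto simp: abs_if split: if_splits)
qed

lemma Fadj_lower_neighbour_unique:
  fixes k :: int
  assumes "k > 0" "even k"
    and adj: "Fadj k x y1" "Fadj k x y2"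
    and lower: "height y1 < height x" "height y2 < height x"
  shows "y1 = y2"
proof -
  obtain p q a1 b1 a2 b2 where xy: "x = (p, q)" "y1 = (a1, b1)" "y2 = (a2, b2)"
    by (metis prod.exhaust)
  have V: "(a1, b1) \<in> Vert" "(a2, b2) \<in> Vert" "coprime p q"
    and dist: "\<bar>p * b1 - q * a1\<bar> = k" "\<bar>p * b2 - q * a2\<bar> = k"
    using adj xy by (auto simp: Fadj_def fdist_def Vert_def)
  have low: "b1 \<le> q" "b1 = q \<Longrightarrow> \<bar>a1\<bar> \<le> \<bar>p\<bar>" "b2 \<le> q" "b2 = q \<Longrightarrow> \<bar>a2\<bar> \<le> \<bar>p\<bar>"
    using less_height_imp lower xy by auto
  have "0 \<le> b1"
    using V(1) by (auto simp: Vert_def)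
  with dist(1) low(1) \<open>k > 0\<close> have "q > 0"
    by (cases "q = 0") auto
  have "y1 \<noteq> x"
    using Fadj_irrefl[of k x] adj(1) \<open>k > 0\<close> by auto
  then show ?thesis
    using lower_solutions_top_or_eq[OF \<open>even k\<close> V(3) \<open>q > 0\<close> V(1,2) dist low] xy by auto
qed

lemma not_has_cycle_in_if_lower_neighbour_unique:
  fixes f :: "'a \<Rightarrow> 'b::linorder"
  assumes "symp E" "inj_on f S"
    and unique: "\<And>x y z. x \<in> S \<Longrightarrow> y \<in> S \<Longrightarrow> z \<in> S \<Longrightarrow> E x y \<Longrightarrow> E x z \<Longrightarrow>
      f y < f x \<Longrightarrow> f z < f x \<Longrightarrow> y = z"
  shows "\<not> has_cycle_in E S"
proof
  assume "has_cycle_in E S"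
  then obtain cs where "3 \<le> length cs" "distinct cs" "set cs \<subseteq> S"
    and adj: "\<And>i. i < length cs \<Longrightarrow> E (cs ! i) (cs ! ((i + 1) mod length cs))"
    by (auto simp: has_cycle_in_def)
  define n where "n = length cs"
  have "Max (f ` set cs) \<in> f ` set cs"
    using \<open>3 \<le> length cs\<close> by (intro Max_in) auto
  then obtain i where "i < n" and top: "f (cs ! i) = Max (f ` set cs)"
    by (auto simp: n_def in_set_conv_nth)
  define j where "j = (if i + 1 = n then 0 else i + 1)"
  define h where "h = (if i = 0 then n - 1 else i - 1)"
  have "j < n" "h < n" "(i + 1) mod n = j" "(h + 1) mod n = i" "j \<noteq> i" "h \<noteq> i" "j \<noteq> h"
    using \<open>i < n\<close> \<open>3 \<le> length cs\<close> by (auto simp: j_def h_def n_def)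
  have lower: "f (cs ! m) < f (cs ! i)" if "m < n" "m \<noteq> i" for m
  proof -
    have "cs ! m \<noteq> cs ! i"
      using \<open>distinct cs\<close> that \<open>i < n\<close> by (simp add: n_def nth_eq_iff_index_eq)
    moreover have "cs ! m \<in> S" "cs ! i \<in> S"
      using \<open>set cs \<subseteq> S\<close> that \<open>i < n\<close> by (auto simp: n_def)
    ultimately have "f (cs ! m) \<noteq> f (cs ! i)"
      using \<open>inj_on f S\<close> by (auto dest: inj_onD)
    moreover have "f (cs ! m) \<le> f (cs ! i)"
      using top that by (simp add: n_def)
    ultimately show ?thesis by simp
  qed
  have "E (cs ! i) (cs ! j)" "E (cs ! i) (cs ! h)"
    using adj \<open>i < n\<close> \<open>h < n\<close> \<open>(i + 1) mod n = j\<close> \<open>(h + 1) mod n = i\<close> \<open>symp E\<close>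
    by (auto simp: n_def dest: sympD)
  moreover have "cs ! i \<in> S" "cs ! j \<in> S" "cs ! h \<in> S"
    using \<open>set cs \<subseteq> S\<close> \<open>i < n\<close> \<open>j < n\<close> \<open>h < n\<close> by (auto simp: n_def)
  ultimately have "cs ! j = cs ! h"
    using unique lower[OF \<open>j < n\<close> \<open>j \<noteq> i\<close>] lower[OF \<open>h < n\<close> \<open>h \<noteq> i\<close>] by blast
  then show False
    using \<open>distinct cs\<close> \<open>j < n\<close> \<open>h < n\<close> \<open>j \<noteq> h\<close> by (simp add: n_def nth_eq_iff_index_eq)
qed

lemma rtranclp_imp_rtranclp_within_component:
  assumes "E\<^sup>*\<^sup>* v w"
  shows "(\<lambda>a b. a \<in> component E v \<and> b \<in> component E v \<and> E a b)\<^sup>*\<^sup>* v w"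
  using assms
proof (induction rule: rtranclp_induct)
  case (step y z)
  then have "y \<in> component E v" "z \<in> component E v"
    by (auto simp: component_def)
  with step show ?case
    by (simp add: rtranclp.rtrancl_into_rtrancl)
qed simp

lemma is_tree_component:
  assumes "symp E" "\<not> has_cycle_in E (component E v)"
  shows "is_tree E (component E v)"
proof -
  let ?R = "\<lambda>a b. a \<in> component E v \<and> b \<in> component E v \<and> E a b"
  have "symp ?R"
    using \<open>symp E\<close> by (auto intro: sympI dest: sympD)
  have "?R\<^sup>*\<^sup>* x y" if "x \<in> component E v" "y \<in> component E v" for x y
  proof -
    have "?R\<^sup>*\<^sup>* v x" "?R\<^sup>*\<^sup>* v y"
      using that rtranclp_imp_rtranclp_within_component by (auto simp: component_def)
    then show ?thesis
      using symp_rtranclp[OF \<open>symp ?R\<close>] by (meson rtranclp_trans sympD)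
  qed
  moreover have "v \<in> component E v"
    by (simp add: component_def)
  ultimately show ?thesis
    using assms(2) unfolding is_tree_def by blast
qed

lemma coprime_if_det_and_congruent:
  fixes p q a b k :: int
  assumes "coprime p q" "p * b - q * a = k" "k dvd a - p" "k dvd b - q"
  shows "coprime a b"
proof (rule coprimeI)
  fix c assume "c dvd a" "c dvd b"
  then have "c dvd p * b - q * a"
    by simp
  then have "c dvd k"
    using assms(2) by simp
  then have "c dvd a - p" "c dvd b - q"
    using assms(3,4) by (auto intro: dvd_trans)
  then have "c dvd p" "c dvd q"
    using dvd_diff[OF \<open>c dvd a\<close> \<open>c dvd a - p\<close>] dvd_diff[OF \<open>c dvd b\<close> \<open>c dvd b - q\<close>]
    by simp_all
  with assms(1) show "is_unit c"
    by (rule coprime_common_divisor)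
qed

lemma Fadj_Bezout_neighbour:
  fixes k p q u v s :: int
  assumes "k > 0" "(p, q) \<in> Vert" "u * p + v * q = 1" "\<bar>u\<bar> \<le> s"
  shows "Fadj k (p, q) ((1 + k * s) * p - k * v, (1 + k * s) * q + k * u)"
proof -
  define a where "a = (1 + k * s) * p - k * v"
  define b where "b = (1 + k * s) * q + k * u"
  have "p * b - q * a = k * (u * p + v * q)"
    by (simp add: a_def b_def algebra_simps)
  with assms(3) have det: "p * b - q * a = k"
    by simp
  have "coprime p q" "q > 0 \<or> (q = 0 \<and> p = 1)"
    using assms(2) by (auto simp: Vert_def)
  moreover have "k dvd a - p" "k dvd b - q"
    by (simp_all add: a_def b_def algebra_simps)
  ultimately have "coprime a b"
    using det coprime_if_det_and_congruent by blast
  moreover have "b > 0"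
  proof (cases "q > 0")
    case True
    have "0 \<le> k * \<bar>u\<bar>" "- (k * u) \<le> k * \<bar>u\<bar>"
      using \<open>k > 0\<close> abs_ge_minus_self[of "k * u"] by (simp_all add: abs_mult)
    moreover have "k * \<bar>u\<bar> < 1 + k * s"
      using \<open>k > 0\<close> assms(4) by (simp add: mult_left_mono add_strict_increasing)
    moreover have "1 + k * s \<le> (1 + k * s) * q"
      using True calculation by (auto simp: mult_le_cancel_left1)
    ultimately show ?thesis
      unfolding b_def by linarith
  next
    case False
    with \<open>q > 0 \<or> (q = 0 \<and> p = 1)\<close> assms(3) have "q = 0" "u = 1"
      by auto
    with \<open>k > 0\<close> show ?thesis
      by (simp add: b_def)
  qed
  ultimately have "(a, b) \<in> Vert"
    by (simp add: Vert_def)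
  with det assms(1,2) show ?thesis
    by (simp add: Fadj_def fdist_def a_def b_def)
qed

lemma infinite_Fadj_neighbours:
  fixes k :: int
  assumes "k > 0" "(p, q) \<in> Vert"
  shows "infinite {y. Fadj k (p, q) y}"
proof -
  obtain u v where uv: "u * p + v * q = 1"
    using bezout_int[of p q] assms(2) by (auto simp: Vert_def)
  define g where
    "g n = (let s = \<bar>u\<bar> + int n in ((1 + k * s) * p - k * v, (1 + k * s) * q + k * u))" for n
  have "range g \<subseteq> {y. Fadj k (p, q) y}"
    using Fadj_Bezout_neighbour[OF assms uv] by (auto simp: g_def Let_def)
  moreover have "inj g"
  proof
    fix n n' assume "g n = g n'"
    then have "k * int n * p = k * int n' * p" "k * int n * q = k * int n' * q"
      by (auto simp: g_def algebra_simps)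
    moreover have "p \<noteq> 0 \<or> q \<noteq> 0"
      using assms(2) by (auto simp: Vert_def)
    ultimately show "n = n'"
      using \<open>k > 0\<close> by auto
  qed
  ultimately show ?thesis
    using infinite_iff_countable_subset by blast
qed

lemma component_Fadj_subset_Vert:
  assumes "v \<in> Vert"
  shows "component (Fadj k) v \<subseteq> Vert"
proof
  fix w assume "w \<in> component (Fadj k) v"
  then have "(Fadj k)\<^sup>*\<^sup>* v w"
    by (simp add: component_def)
  then show "w \<in> Vert"
    using assms by (induction rule: rtranclp_induct) (auto simp: Fadj_def)
qed

theorem proposition4p13:
  fixes k :: int
  assumes "k > 0" and "even k"
  shows "\<forall>v\<in>Vert. is_tree (Fadj k) (component (Fadj k) v) \<and>
           (\<forall>w\<in>component (Fadj k) v. infinite {u. Fadj k w u})"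
proof
  fix v assume "v \<in> Vert"
  have "\<not> has_cycle_in (Fadj k) (component (Fadj k) v)"
    using not_has_cycle_in_if_lower_neighbour_unique[OF symp_Fadj inj_on_subset[OF inj_height]]
      Fadj_lower_neighbour_unique[OF assms] by blast
  then have "is_tree (Fadj k) (component (Fadj k) v)"
    by (rule is_tree_component[OF symp_Fadj])
  moreover have "\<forall>w\<in>component (Fadj k) v. infinite {u. Fadj k w u}"
    using component_Fadj_subset_Vert[OF \<open>v \<in> Vert\<close>] infinite_Fadj_neighbours[OF \<open>k > 0\<close>] by fast
  ultimately show "is_tree (Fadj k) (component (Fadj k) v) \<and>
      (\<forall>w\<in>component (Fadj k) v. infinite {u. Fadj k w u})" ..
qed

end
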